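(* Let $R$ be an $\mathbb N$-graded ring with $R_0$ a field, and let $\mathfrak m$ be its homogeneous maximal ideal. Let $M,N$ be finitely generated graded $R$-modules with $N$ torsion-free. If $\phi\colon M_{\mathfrak m}\to N_{\mathfrak m}$ is a morphism of $R_{\mathfrak m}$-modules, then there is a morphism of $R$-modules $\tilde\phi\colon M\to N$ such that $\tilde\phi\otimes_R R_{\mathfrak m}=u\phi$ for some unit $u$ of $R_{\mathfrak m}$. *)

theory Defs
  imports Complex_Main
begin

definition direct_sum_decomp :: "('i \<Rightarrow> 'a::ab_group_add set) \<Rightarrow> bool" where
  "direct_sum_decomp G \<longleftrightarrow>
     (\<forall>i. 0 \<in> G i \<and> (\<forall>x\<in>G i. \<forall>y\<in>G i. x + y \<in> G i \<and> - x \<in> G i)) \<and>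
     (\<forall>r. \<exists>!c. finite {i. c i \<noteq> 0} \<and> (\<forall>i. c i \<in> G i) \<and> r = sum c {i. c i \<noteq> 0})"

definition hcomp :: "('i \<Rightarrow> 'a::ab_group_add set) \<Rightarrow> 'a \<Rightarrow> 'i \<Rightarrow> 'a" where
  "hcomp G r = (THE c. finite {i. c i \<noteq> 0} \<and> (\<forall>i. c i \<in> G i) \<and> r = sum c {i. c i \<noteq> 0})"

definition graded_ring :: "(nat \<Rightarrow> 'r::comm_ring_1 set) \<Rightarrow> bool" where
  "graded_ring G \<longleftrightarrow> direct_sum_decomp G \<and> 1 \<in> G 0 \<and>
     (\<forall>i j. \<forall>x\<in>G i. \<forall>y\<in>G j. x * y \<in> G (i + j))"

definition degree0_field :: "(nat \<Rightarrow> 'r::comm_ring_1 set) \<Rightarrow> bool" where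
  "degree0_field G \<longleftrightarrow> (1::'r) \<noteq> 0 \<and> (\<forall>x\<in>G 0. x \<noteq> 0 \<longrightarrow> (\<exists>y\<in>G 0. x * y = 1))"

definition hom_max_ideal :: "(nat \<Rightarrow> 'r::comm_ring_1 set) \<Rightarrow> 'r set" where
  "hom_max_ideal G = {r. hcomp G r 0 = 0}"

text \<open>A (Z-)graded R-module (the module being the whole type, scalar action sc).\<close>
definition graded_module ::
  "(nat \<Rightarrow> 'r::comm_ring_1 set) \<Rightarrow> ('r \<Rightarrow> 'm::ab_group_add \<Rightarrow> 'm) \<Rightarrow> (int \<Rightarrow> 'm set) \<Rightarrow> bool" where
  "graded_module G sc GM \<longleftrightarrow> module sc \<and> direct_sum_decomp GM \<and>
     (\<forall>i j. \<forall>r\<in>G i. \<forall>x\<in>GM j. sc r x \<in> GM (int i + j))"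

definition fin_gen_module :: "('r::comm_ring_1 \<Rightarrow> 'm::ab_group_add \<Rightarrow> 'm) \<Rightarrow> bool" where
  "fin_gen_module sc \<longleftrightarrow> (\<exists>F. finite F \<and> module.span sc F = UNIV)"

definition torsion_free :: "('r::comm_ring_1 \<Rightarrow> 'm::ab_group_add \<Rightarrow> 'm) \<Rightarrow> bool" where
  "torsion_free sc \<longleftrightarrow> (\<forall>r x. (\<forall>a::'r. r * a = 0 \<longrightarrow> a = 0) \<longrightarrow> sc r x = 0 \<longrightarrow> x = 0)"

definition loc_rel :: "'r::comm_ring_1 set \<Rightarrow> ('r \<Rightarrow> 'm::ab_group_add \<Rightarrow> 'm) \<Rightarrow> (('m \<times> 'r) \<times> ('m \<times> 'r)) set" where
  "loc_rel S sc = {((x, s), (y, t)). s \<in> S \<and> t \<in> S \<and> (\<exists>u\<in>S. sc u (sc t x - sc s y) = 0)}"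

text \<open>The underlying set of S^{-1} M: equivalence classes of fractions x/s.\<close>
definition Loc :: "'r::comm_ring_1 set \<Rightarrow> ('r \<Rightarrow> 'm::ab_group_add \<Rightarrow> 'm) \<Rightarrow> ('m \<times> 'r) set set" where
  "Loc S sc = (UNIV \<times> S) // loc_rel S sc"

definition frac :: "'r::comm_ring_1 set \<Rightarrow> ('r \<Rightarrow> 'm::ab_group_add \<Rightarrow> 'm) \<Rightarrow> 'm \<Rightarrow> 'r \<Rightarrow> ('m \<times> 'r) set" where
  "frac S sc x s = loc_rel S sc `` {(x, s)}"

definition loc_add :: "'r::comm_ring_1 set \<Rightarrow> ('r \<Rightarrow> 'm::ab_group_add \<Rightarrow> 'm) \<Rightarrow>
    ('m \<times> 'r) set \<Rightarrow> ('m \<times> 'r) set \<Rightarrow> ('m \<times> 'r) set" where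
  "loc_add S sc X Y = \<Union>{frac S sc (sc t x + sc s y) (s * t) | x s y t. (x, s) \<in> X \<and> (y, t) \<in> Y}"

definition loc_smult :: "'r::comm_ring_1 set \<Rightarrow> ('r \<Rightarrow> 'm::ab_group_add \<Rightarrow> 'm) \<Rightarrow>
    ('r \<times> 'r) set \<Rightarrow> ('m \<times> 'r) set \<Rightarrow> ('m \<times> 'r) set" where
  "loc_smult S sc A X = \<Union>{frac S sc (sc r x) (s * t) | r s x t. (r, s) \<in> A \<and> (x, t) \<in> X}"

definition loc_module_hom :: "'r::comm_ring_1 set \<Rightarrow> ('r \<Rightarrow> 'm::ab_group_add \<Rightarrow> 'm) \<Rightarrow>
    ('r \<Rightarrow> 'n::ab_group_add \<Rightarrow> 'n) \<Rightarrow> (('m \<times> 'r) set \<Rightarrow> ('n \<times> 'r) set) \<Rightarrow> bool" where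
  "loc_module_hom S scM scN \<phi> \<longleftrightarrow>
     (\<forall>X\<in>Loc S scM. \<phi> X \<in> Loc S scN) \<and>
     (\<forall>X\<in>Loc S scM. \<forall>Y\<in>Loc S scM. \<phi> (loc_add S scM X Y) = loc_add S scN (\<phi> X) (\<phi> Y)) \<and>
     (\<forall>A\<in>Loc S (*). \<forall>X\<in>Loc S scM. \<phi> (loc_smult S scM A X) = loc_smult S scN A (\<phi> X))"

definition loc_unit :: "'r::comm_ring_1 set \<Rightarrow> ('r \<times> 'r) set \<Rightarrow> bool" where
  "loc_unit S u \<longleftrightarrow> u \<in> Loc S (*) \<and> (\<exists>v\<in>Loc S (*). loc_smult S (*) u v = frac S (*) 1 1)"

text \<open>The localized map f \<otimes> S^{-1}R : x/s \<mapsto> f(x)/s.\<close>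
definition loc_map :: "'r::comm_ring_1 set \<Rightarrow> ('r \<Rightarrow> 'n::ab_group_add \<Rightarrow> 'n) \<Rightarrow> ('m \<Rightarrow> 'n) \<Rightarrow>
    ('m \<times> 'r) set \<Rightarrow> ('n \<times> 'r) set" where
  "loc_map S scN f X = \<Union>{frac S scN (f x) s | x s. (x, s) \<in> X}"

end

theory Submission
  imports Defs
begin

text \<open>
  The complement \<open>S\<close> of the homogeneous maximal ideal is multiplicative and consists of
  non-zero-divisors: the degree-0 component of \<open>s * a\<close> is the product of the degree-0 components,
  and in the lowest degree \<open>d\<close> where \<open>a\<close> is nonzero the component of \<open>s * a\<close> is \<open>s\<^sub>0 a\<^sub>d\<close>,
  with \<open>s\<^sub>0\<close> invertible because \<open>R\<^sub>0\<close> is a field.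

  If \<open>m\<^sub>1, \<dots>, m\<^sub>k\<close> generate \<open>M\<close> and \<open>\<phi>(m\<^sub>i/1) = n\<^sub>i/s\<^sub>i\<close>, then a common denominator
  \<open>s \<in> S\<close> makes \<open>s \<phi>(m/1)\<close> a fraction with denominator 1 for every \<open>m\<close>. As \<open>N\<close> is torsion-free
  and \<open>S\<close> contains no zero-divisors, \<open>N \<rightarrow> S\<inverse>N\<close> is injective, so \<open>s \<phi>(m/1) = \<psi>(m)/1\<close>
  defines an \<open>R\<close>-linear \<open>\<psi>\<close> with \<open>\<psi> \<otimes> R\<^sub>m = s \<phi>\<close>, and \<open>s\<close> is a unit of \<open>R\<^sub>m\<close>.
\<close>

section \<open>Homogeneous components\<close>

lemma hcomp_spec:
  assumes "direct_sum_decomp G"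
  shows "finite {i. hcomp G r i \<noteq> 0}" "\<And>i. hcomp G r i \<in> G i"
    "r = sum (hcomp G r) {i. hcomp G r i \<noteq> 0}"
proof -
  have "\<exists>!c. finite {i. c i \<noteq> 0} \<and> (\<forall>i. c i \<in> G i) \<and> r = sum c {i. c i \<noteq> 0}"
    using assms unfolding direct_sum_decomp_def by blast
  from theI'[OF this] show "finite {i. hcomp G r i \<noteq> 0}" "\<And>i. hcomp G r i \<in> G i"
    "r = sum (hcomp G r) {i. hcomp G r i \<noteq> 0}"
    unfolding hcomp_def by blast+
qed

lemma hcomp_unique:
  assumes "direct_sum_decomp G" "finite {i. c i \<noteq> 0}" "\<And>i. c i \<in> G i" "r = sum c {i. c i \<noteq> 0}"
  shows "hcomp G r = c"
proof -
  have "\<exists>!c. finite {i. c i \<noteq> 0} \<and> (\<forall>i. c i \<in> G i) \<and> r = sum c {i. c i \<noteq> 0}"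
    using assms(1) unfolding direct_sum_decomp_def by blast
  then show ?thesis
    unfolding hcomp_def by (rule the1_equality) (use assms in auto)
qed

lemma sum_hcomp_superset:
  assumes "direct_sum_decomp G" "finite F" "{i. hcomp G r i \<noteq> 0} \<subseteq> F"
  shows "r = (\<Sum>i\<in>F. hcomp G r i)"
proof -
  have "r = sum (hcomp G r) {i. hcomp G r i \<noteq> 0}" using hcomp_spec[OF assms(1)] by blast
  also have "\<dots> = (\<Sum>i\<in>F. hcomp G r i)"
    by (rule sum.mono_neutral_left) (use assms in auto)
  finally show ?thesis .
qed

lemma hcomp_zero:
  assumes "direct_sum_decomp G"
  shows "hcomp G 0 = (\<lambda>i. 0)"
  by (rule hcomp_unique[OF assms]) (use assms in \<open>auto simp: direct_sum_decomp_def\<close>)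

lemma hcomp_add:
  assumes d: "direct_sum_decomp G"
  shows "hcomp G (x + y) = (\<lambda>i. hcomp G x i + hcomp G y i)"
proof (rule hcomp_unique[OF d])
  let ?c = "\<lambda>i. hcomp G x i + hcomp G y i"
  let ?U = "{i. hcomp G x i \<noteq> 0} \<union> {i. hcomp G y i \<noteq> 0}"
  have U: "finite ?U" "{i. ?c i \<noteq> 0} \<subseteq> ?U"
    using hcomp_spec(1)[OF d] by auto
  then show "finite {i. ?c i \<noteq> 0}" by (rule finite_subset[rotated])
  show "?c i \<in> G i" for i
    using hcomp_spec(2)[OF d] d unfolding direct_sum_decomp_def by blast
  have "x + y = sum ?c ?U"
    using sum_hcomp_superset[OF d U(1), of x] sum_hcomp_superset[OF d U(1), of y]
    by (simp add: sum.distrib)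
  also have "\<dots> = sum ?c {i. ?c i \<noteq> 0}"
    by (rule sum.mono_neutral_right) (use U in auto)
  finally show "x + y = sum ?c {i. ?c i \<noteq> 0}" .
qed

lemma hcomp_sum:
  assumes "direct_sum_decomp G" "finite A"
  shows "hcomp G (\<Sum>a\<in>A. f a) k = (\<Sum>a\<in>A. hcomp G (f a) k)"
  using assms(2) by induction (simp_all add: hcomp_zero[OF assms(1)] hcomp_add[OF assms(1)])

lemma hcomp_homogeneous:
  assumes d: "direct_sum_decomp G" and x: "x \<in> G k"
  shows "hcomp G x = (\<lambda>i. if i = k then x else 0)"
proof (rule hcomp_unique[OF d])
  have supp: "{i. (if i = k then x else 0) \<noteq> 0} = (if x = 0 then {} else {k})" by auto
  show "finite {i. (if i = k then x else 0) \<noteq> 0}" unfolding supp by simp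
  show "(if i = k then x else 0) \<in> G i" for i using d x unfolding direct_sum_decomp_def by auto
  show "x = (\<Sum>i\<in>{i. (if i = k then x else 0) \<noteq> 0}. if i = k then x else 0)"
    unfolding supp by simp
qed

lemma hcomp_mult_lowest_degree:
  fixes G :: "nat \<Rightarrow> 'r::comm_ring_1 set"
  assumes g: "graded_ring G" and low: "\<And>j. j < d \<Longrightarrow> hcomp G a j = 0"
  shows "hcomp G (s * a) d = hcomp G s 0 * hcomp G a d"
proof -
  have dd: "direct_sum_decomp G"
    and mult: "\<And>i j x y. x \<in> G i \<Longrightarrow> y \<in> G j \<Longrightarrow> x * y \<in> G (i + j)"
    using g unfolding graded_ring_def by auto
  define F where "F = {i. hcomp G s i \<noteq> 0} \<union> {i. hcomp G a i \<noteq> 0} \<union> {0, d}"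
  have F: "finite F" "0 \<in> F" "d \<in> F" unfolding F_def using hcomp_spec(1)[OF dd] by auto
  have "s = (\<Sum>i\<in>F. hcomp G s i)" "a = (\<Sum>j\<in>F. hcomp G a j)"
    by (rule sum_hcomp_superset[OF dd F(1)], force simp: F_def)+
  then have "s * a = (\<Sum>i\<in>F. hcomp G s i) * (\<Sum>j\<in>F. hcomp G a j)"
    by simp
  then have "hcomp G (s * a) d = (\<Sum>i\<in>F. \<Sum>j\<in>F. hcomp G (hcomp G s i * hcomp G a j) d)"
    by (simp add: sum_product hcomp_sum[OF dd] F(1))
  also have "\<dots> = (\<Sum>i\<in>F. \<Sum>j\<in>F. if i = 0 \<and> j = d then hcomp G s 0 * hcomp G a d else 0)"
  proof (intro sum.cong refl)
    fix i j
    have "hcomp G s i * hcomp G a j \<in> G (i + j)" by (intro mult hcomp_spec(2)[OF dd])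
    then show "hcomp G (hcomp G s i * hcomp G a j) d
        = (if i = 0 \<and> j = d then hcomp G s 0 * hcomp G a d else 0)"
      using low[of j] by (auto simp: hcomp_homogeneous[OF dd])
  qed
  also have "\<dots> = hcomp G s 0 * hcomp G a d"
  proof -
    have "(\<Sum>j\<in>F. if i = 0 \<and> j = d then c else 0) = (if i = 0 then c else 0)" for i :: nat and c :: 'r
      using F by (cases "i = 0") simp_all
    then show ?thesis using F(1,2) by simp
  qed
  finally show ?thesis .
qed

lemma degree0_field_mult_eq_0:
  assumes "degree0_field G" "x \<in> G 0" "x \<noteq> 0" "x * y = 0"
  shows "y = 0"
proof -
  obtain z where "x * z = 1" using assms(1-3) unfolding degree0_field_def by blast
  then have "y = (x * z) * y" by simp
  then have "y = z * (x * y)" by (simp add: ac_simps)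
  then show ?thesis using assms(4) by simp
qed

lemma one_not_in_hom_max_ideal:
  assumes "graded_ring G" "degree0_field G"
  shows "1 \<notin> hom_max_ideal G"
proof -
  have "direct_sum_decomp G" "1 \<in> G 0" using assms(1) unfolding graded_ring_def by auto
  then have "hcomp G 1 0 = 1" by (simp add: hcomp_homogeneous)
  then show ?thesis using assms(2) unfolding hom_max_ideal_def degree0_field_def by simp
qed

lemma mult_not_in_hom_max_ideal:
  assumes g: "graded_ring G" and f: "degree0_field G"
    and a: "a \<notin> hom_max_ideal G" and b: "b \<notin> hom_max_ideal G"
  shows "a * b \<notin> hom_max_ideal G"
proof
  assume ab: "a * b \<in> hom_max_ideal G"
  have dd: "direct_sum_decomp G" using g by (simp add: graded_ring_def)
  have "hcomp G b 0 = 0"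
  proof (rule degree0_field_mult_eq_0[OF f hcomp_spec(2)[OF dd]])
    show "hcomp G a 0 \<noteq> 0" using a by (simp add: hom_max_ideal_def)
    have "hcomp G (a * b) 0 = hcomp G a 0 * hcomp G b 0"
      by (rule hcomp_mult_lowest_degree[OF g]) simp
    with ab show "hcomp G a 0 * hcomp G b 0 = 0" by (simp add: hom_max_ideal_def)
  qed
  with b show False by (simp add: hom_max_ideal_def)
qed

lemma not_in_hom_max_ideal_mult_eq_0:
  assumes g: "graded_ring G" and f: "degree0_field G"
    and s: "s \<notin> hom_max_ideal G" and sa: "s * a = 0"
  shows "a = 0"
proof (rule ccontr)
  assume "a \<noteq> 0"
  have dd: "direct_sum_decomp G" using g by (simp add: graded_ring_def)
  have "\<exists>j. hcomp G a j \<noteq> 0"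
  proof (rule ccontr)
    assume "\<nexists>j. hcomp G a j \<noteq> 0"
    then show False using hcomp_spec(3)[OF dd, of a] \<open>a \<noteq> 0\<close> by simp
  qed
  define d where "d = (LEAST j. hcomp G a j \<noteq> 0)"
  have ad: "hcomp G a d \<noteq> 0"
    unfolding d_def using \<open>\<exists>j. _\<close> by (rule LeastI_ex)
  have low: "hcomp G a j = 0" if "j < d" for j
    using not_less_Least[OF that[unfolded d_def]] by simp
  have "hcomp G a d = 0"
  proof (rule degree0_field_mult_eq_0[OF f hcomp_spec(2)[OF dd]])
    show "hcomp G s 0 \<noteq> 0" using s by (simp add: hom_max_ideal_def)
    have "hcomp G (s * a) d = hcomp G s 0 * hcomp G a d"
      by (rule hcomp_mult_lowest_degree[OF g low])
    with sa show "hcomp G s 0 * hcomp G a d = 0" by (simp add: hcomp_zero[OF dd])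
  qed
  with ad show False by contradiction
qed

section \<open>Localization of modules\<close>

locale localization = module scale
  for scale :: "'a::comm_ring_1 \<Rightarrow> 'b::ab_group_add \<Rightarrow> 'b" (infixr \<open>*s\<close> 75) +
  fixes S :: "'a set"
  assumes one_in_S: "1 \<in> S" and mult_in_S: "a \<in> S \<Longrightarrow> b \<in> S \<Longrightarrow> a * b \<in> S"
begin

lemma loc_rel_iff:
  "((x, s), (y, t)) \<in> loc_rel S scale \<longleftrightarrow> s \<in> S \<and> t \<in> S \<and> (\<exists>u\<in>S. u *s (t *s x - s *s y) = 0)"
  by (simp add: loc_rel_def)

lemma equiv_loc_rel: "equiv (UNIV \<times> S) (loc_rel S scale)"
proof (rule equivI)
  show "loc_rel S scale \<subseteq> (UNIV \<times> S) \<times> (UNIV \<times> S)" by (auto simp: loc_rel_def)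
  show "refl_on (UNIV \<times> S) (loc_rel S scale)"
    unfolding refl_on_def by (auto simp: loc_rel_def intro: one_in_S)
  show "sym (loc_rel S scale)"
  proof (rule symI)
    fix a b assume "(a, b) \<in> loc_rel S scale"
    then obtain x s y t u where ab: "a = (x, s)" "b = (y, t)" "s \<in> S" "t \<in> S"
      and u: "u \<in> S" "u *s (t *s x - s *s y) = 0"
      by (cases a, cases b) (auto simp: loc_rel_iff)
    have "u *s (s *s y - t *s x) = - (u *s (t *s x - s *s y))" by (simp add: algebra_simps)
    with ab u show "(b, a) \<in> loc_rel S scale" by (auto simp: loc_rel_iff)
  qed
  show "trans (loc_rel S scale)"
  proof (rule transI)
    fix a b c assume "(a, b) \<in> loc_rel S scale" "(b, c) \<in> loc_rel S scale"
    then obtain x s y t z w u v where abc: "a = (x, s)" "b = (y, t)" "c = (z, w)" "s \<in> S" "t \<in> S" "w \<in> S"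
      and uv: "u \<in> S" "v \<in> S" "u *s (t *s x - s *s y) = 0" "v *s (w *s y - t *s z) = 0"
      by (cases a, cases b, cases c) (auto simp: loc_rel_iff)
    have "(u * v * t) *s (w *s x - s *s z)
        = (v * w) *s (u *s (t *s x - s *s y)) + (u * s) *s (v *s (w *s y - t *s z))"
      by (simp add: algebra_simps)
    with uv have "(u * v * t) *s (w *s x - s *s z) = 0" by simp
    moreover have "u * v * t \<in> S" using uv abc by (intro mult_in_S)
    ultimately show "(a, c) \<in> loc_rel S scale" using abc by (auto simp: loc_rel_iff)
  qed
qed

lemma frac_eq_iff:
  "s \<in> S \<Longrightarrow> t \<in> S \<Longrightarrow>
    frac S scale x s = frac S scale y t \<longleftrightarrow> (\<exists>u\<in>S. u *s (t *s x - s *s y) = 0)"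
  unfolding frac_def using eq_equiv_class_iff[OF equiv_loc_rel, of "(x, s)" "(y, t)"]
  by (simp add: loc_rel_iff)

lemma frac_eqI:
  "s \<in> S \<Longrightarrow> t \<in> S \<Longrightarrow> u \<in> S \<Longrightarrow> u *s (t *s x - s *s y) = 0 \<Longrightarrow>
    frac S scale x s = frac S scale y t"
  using frac_eq_iff by blast

lemma frac_in_Loc: "s \<in> S \<Longrightarrow> frac S scale x s \<in> Loc S scale"
  unfolding Loc_def frac_def by (rule quotientI) simp

lemma Loc_cases:
  assumes "X \<in> Loc S scale"
  obtains x s where "s \<in> S" "X = frac S scale x s"
  using assms unfolding Loc_def frac_def by (auto elim!: quotientE)

lemma mem_frac_iff: "(y, t) \<in> frac S scale x s \<longleftrightarrow> ((x, s), (y, t)) \<in> loc_rel S scale"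
  by (simp add: frac_def)

lemma in_frac_self: "s \<in> S \<Longrightarrow> (x, s) \<in> frac S scale x s"
  by (auto simp: mem_frac_iff loc_rel_iff intro: bexI[OF _ one_in_S])

lemma frac_add_cong:
  assumes "(x', s') \<in> frac S scale x s" "(y', t') \<in> frac S scale y t"
  shows "frac S scale (t' *s x' + s' *s y') (s' * t') = frac S scale (t *s x + s *s y) (s * t)"
proof -
  obtain u v where S: "s \<in> S" "s' \<in> S" "t \<in> S" "t' \<in> S" "u \<in> S" "v \<in> S"
    and uv: "u *s (s' *s x - s *s x') = 0" "v *s (t' *s y - t *s y') = 0"
    using assms by (auto simp: mem_frac_iff loc_rel_iff)
  have "(u * v) *s ((s * t) *s (t' *s x' + s' *s y') - (s' * t') *s (t *s x + s *s y))
      = - ((v * t * t') *s (u *s (s' *s x - s *s x'))) - ((u * s * s') *s (v *s (t' *s y - t *s y')))"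
    by (simp add: algebra_simps)
  with uv have "(u * v) *s ((s * t) *s (t' *s x' + s' *s y') - (s' * t') *s (t *s x + s *s y)) = 0"
    by simp
  then show ?thesis by (rule frac_eqI[rotated 3]) (use S mult_in_S in auto)
qed

lemma loc_add_frac:
  assumes "s \<in> S" "t \<in> S"
  shows "loc_add S scale (frac S scale x s) (frac S scale y t) = frac S scale (t *s x + s *s y) (s * t)"
proof -
  have "{frac S scale (t' *s x' + s' *s y') (s' * t') | x' s' y' t'.
          (x', s') \<in> frac S scale x s \<and> (y', t') \<in> frac S scale y t}
      = {frac S scale (t *s x + s *s y) (s * t)}" (is "?A = {?v}")
  proof
    show "?A \<subseteq> {?v}" by (auto simp only: frac_add_cong)
    show "{?v} \<subseteq> ?A"
      using in_frac_self[OF assms(1), of x] in_frac_self[OF assms(2), of y] by blast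
  qed
  then show ?thesis unfolding loc_add_def by simp
qed

lemma localization_ring: "localization (*) S"
  by unfold_locales (simp_all add: algebra_simps one_in_S mult_in_S)

lemma frac_smult_cong:
  assumes "(r', s') \<in> frac S (*) r s" "(x', t') \<in> frac S scale x t"
  shows "frac S scale (r' *s x') (s' * t') = frac S scale (r *s x) (s * t)"
proof -
  have S: "s \<in> S" "s' \<in> S" "t \<in> S" "t' \<in> S"
    and "\<exists>u\<in>S. u * (s' * r - s * r') = 0" "\<exists>v\<in>S. v *s (t' *s x - t *s x') = 0"
    using assms by (simp_all add: mem_frac_iff loc_rel_iff localization.mem_frac_iff[OF localization_ring]
      localization.loc_rel_iff[OF localization_ring])
  then obtain u v where uS: "u \<in> S" "v \<in> S"
    and uv: "u * (s' * r - s * r') = 0" "v *s (t' *s x - t *s x') = 0"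
    by blast
  have "(u * v) *s ((s * t) *s (r' *s x') - (s' * t') *s (r *s x))
      = - ((v * t') *s ((u * (s' * r - s * r')) *s x)) - ((u * s * r') *s (v *s (t' *s x - t *s x')))"
    by (simp add: algebra_simps)
  with uv have "(u * v) *s ((s * t) *s (r' *s x') - (s' * t') *s (r *s x)) = 0"
    by simp
  then show ?thesis by (rule frac_eqI[rotated 3]) (use S uS mult_in_S in auto)
qed

lemma loc_smult_frac:
  assumes "s \<in> S" "t \<in> S"
  shows "loc_smult S scale (frac S (*) r s) (frac S scale x t) = frac S scale (r *s x) (s * t)"
proof -
  have "{frac S scale (r' *s x') (s' * t') | r' s' x' t'.
          (r', s') \<in> frac S (*) r s \<and> (x', t') \<in> frac S scale x t}
      = {frac S scale (r *s x) (s * t)}" (is "?A = {?v}")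
  proof
    show "?A \<subseteq> {?v}" by (auto simp only: frac_smult_cong)
    show "{?v} \<subseteq> ?A"
      using localization.in_frac_self[OF localization_ring assms(1), of r] in_frac_self[OF assms(2), of x]
      by blast
  qed
  then show ?thesis unfolding loc_smult_def by simp
qed


lemma loc_smult_in_Loc:
  assumes "A \<in> Loc S (*)" "X \<in> Loc S scale"
  shows "loc_smult S scale A X \<in> Loc S scale"
proof -
  obtain r a x t where "a \<in> S" "A = frac S (*) r a" "t \<in> S" "X = frac S scale x t"
    using assms localization.Loc_cases[OF localization_ring] Loc_cases by metis
  then show ?thesis by (simp add: loc_smult_frac frac_in_Loc mult_in_S)
qed

lemma loc_smult_add:
  assumes "A \<in> Loc S (*)" "X \<in> Loc S scale" "Y \<in> Loc S scale"
  shows "loc_smult S scale A (loc_add S scale X Y) = loc_add S scale (loc_smult S scale A X) (loc_smult S scale A Y)"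
proof -
  obtain r a where a: "a \<in> S" "A = frac S (*) r a"
    using assms(1) by (rule localization.Loc_cases[OF localization_ring])
  obtain x s where s: "s \<in> S" "X = frac S scale x s" using assms(2) by (rule Loc_cases)
  obtain y t where t: "t \<in> S" "Y = frac S scale y t" using assms(3) by (rule Loc_cases)
  have "frac S scale (r *s (t *s x + s *s y)) (a * (s * t))
      = frac S scale ((a * t) *s r *s x + (a * s) *s r *s y) (a * s * (a * t))"
    by (rule frac_eqI[OF _ _ one_in_S]) (use a s t in \<open>simp_all add: mult_in_S algebra_simps\<close>)
  with a s t show ?thesis by (simp add: loc_smult_frac loc_add_frac mult_in_S)
qed

lemma loc_smult_mult:
  assumes "A \<in> Loc S (*)" "B \<in> Loc S (*)" "X \<in> Loc S scale"
  shows "loc_smult S scale (loc_smult S (*) A B) X = loc_smult S scale A (loc_smult S scale B X)"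
proof -
  obtain r a r' b where "a \<in> S" "A = frac S (*) r a" "b \<in> S" "B = frac S (*) r' b"
    using assms(1,2) localization.Loc_cases[OF localization_ring] by metis
  moreover obtain x t where "t \<in> S" "X = frac S scale x t" using assms(3) by (rule Loc_cases)
  ultimately show ?thesis
    by (simp add: loc_smult_frac localization.loc_smult_frac[OF localization_ring] mult_in_S mult.assoc)
qed

lemma loc_smult_commute:
  assumes "A \<in> Loc S (*)" "B \<in> Loc S (*)" "X \<in> Loc S scale"
  shows "loc_smult S scale A (loc_smult S scale B X) = loc_smult S scale B (loc_smult S scale A X)"
proof -
  obtain r a r' b where "a \<in> S" "A = frac S (*) r a" "b \<in> S" "B = frac S (*) r' b"
    using assms(1,2) localization.Loc_cases[OF localization_ring] by metis
  moreover obtain x t where "t \<in> S" "X = frac S scale x t" using assms(3) by (rule Loc_cases)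
  ultimately show ?thesis by (simp add: loc_smult_frac mult_in_S mult_ac)
qed

lemma loc_smult_zero:
  assumes "X \<in> Loc S scale"
  shows "loc_smult S scale (frac S (*) 0 1) X = frac S scale 0 1"
proof -
  obtain x t where "t \<in> S" "X = frac S scale x t" using assms by (rule Loc_cases)
  moreover have "frac S scale 0 t = frac S scale 0 1" if "t \<in> S"
    by (rule frac_eqI[OF that one_in_S one_in_S]) simp
  ultimately show ?thesis by (simp add: loc_smult_frac one_in_S)
qed

lemma loc_unit_frac:
  assumes "s \<in> S"
  shows "loc_unit S (frac S (*) s 1)"
proof -
  interpret R: localization "(*)" S by (rule localization_ring)
  have "loc_smult S (*) (frac S (*) s 1) (frac S (*) 1 s) = frac S (*) 1 1"
    using assms by (auto simp: R.loc_smult_frac one_in_S R.frac_eq_iff intro: one_in_S)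
  then show ?thesis
    unfolding loc_unit_def using assms one_in_S by (blast intro: R.frac_in_Loc)
qed

lemma frac_one_inj:
  assumes no_torsion: "\<And>s x. s \<in> S \<Longrightarrow> s *s x = 0 \<Longrightarrow> x = 0"
    and "frac S scale x 1 = frac S scale y 1"
  shows "x = y"
proof -
  obtain u where "u \<in> S" "u *s (x - y) = 0"
    using assms(2) by (auto simp: frac_eq_iff one_in_S)
  then show ?thesis using no_torsion by fastforce
qed

lemma common_denominator:
  assumes "finite F" "\<And>x. x \<in> F \<Longrightarrow> X x \<in> Loc S scale"
  shows "\<exists>s\<in>S. \<forall>x\<in>F. \<exists>n. loc_smult S scale (frac S (*) s 1) (X x) = frac S scale n 1"
  using assms
proof (induction F rule: finite_induct)
  case empty
  then show ?case using one_in_S by blast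
next
  case (insert y F)
  then obtain s where s: "s \<in> S" "\<forall>x\<in>F. \<exists>n. loc_smult S scale (frac S (*) s 1) (X x) = frac S scale n 1"
    by blast
  obtain m t where t: "t \<in> S" "X y = frac S scale m t"
    using insert.prems by (meson Loc_cases insertI1)
  interpret R: localization "(*)" S by (rule localization_ring)
  have st: "frac S (*) (t * s) 1 = loc_smult S (*) (frac S (*) t 1) (frac S (*) s 1)"
    by (simp add: R.loc_smult_frac one_in_S)
  have "\<exists>n. loc_smult S scale (frac S (*) (t * s) 1) (X x) = frac S scale n 1" if x: "x \<in> insert y F" for x
  proof (cases "x = y")
    case True
    have "frac S scale ((t * s) *s m) t = frac S scale (s *s m) 1"
      by (rule frac_eqI[OF t(1) one_in_S one_in_S]) (simp add: algebra_simps)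
    then show ?thesis using True t by (auto simp: loc_smult_frac one_in_S)
  next
    case False
    with x s obtain n where "loc_smult S scale (frac S (*) s 1) (X x) = frac S scale n 1" by auto
    then have "loc_smult S scale (frac S (*) (t * s) 1) (X x) = frac S scale (t *s n) 1"
      using x insert.prems t(1) one_in_S
      by (simp add: st loc_smult_mult R.frac_in_Loc loc_smult_frac)
    then show ?thesis by blast
  qed
  then show ?case using s(1) t(1) mult_in_S by blast
qed

end

section \<open>Lifting morphisms of localized modules\<close>

locale localized_module_hom =
  M: localization scM S + N: localization scN S
  for scM :: "'a::comm_ring_1 \<Rightarrow> 'b::ab_group_add \<Rightarrow> 'b"
    and scN :: "'a \<Rightarrow> 'c::ab_group_add \<Rightarrow> 'c"
    and S :: "'a set" +
  fixes \<phi> :: "('b \<times> 'a) set \<Rightarrow> ('c \<times> 'a) set"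
  assumes hom: "loc_module_hom S scM scN \<phi>"
begin

lemma phi_in_Loc: "X \<in> Loc S scM \<Longrightarrow> \<phi> X \<in> Loc S scN"
  using hom unfolding loc_module_hom_def by blast

lemma phi_loc_add:
  "X \<in> Loc S scM \<Longrightarrow> Y \<in> Loc S scM \<Longrightarrow>
    \<phi> (loc_add S scM X Y) = loc_add S scN (\<phi> X) (\<phi> Y)"
  using hom unfolding loc_module_hom_def by blast

lemma phi_loc_smult:
  "A \<in> Loc S (*) \<Longrightarrow> X \<in> Loc S scM \<Longrightarrow>
    \<phi> (loc_smult S scM A X) = loc_smult S scN A (\<phi> X)"
  using hom unfolding loc_module_hom_def by blast

lemma phi_frac_zero: "\<phi> (frac S scM 0 1) = frac S scN 0 1"
proof -
  have R: "frac S (*) 0 1 \<in> Loc S (*)"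
    by (rule localization.frac_in_Loc[OF M.localization_ring M.one_in_S])
  have M0: "frac S scM 0 1 \<in> Loc S scM" by (rule M.frac_in_Loc[OF M.one_in_S])
  have "\<phi> (frac S scM 0 1) = \<phi> (loc_smult S scM (frac S (*) 0 1) (frac S scM 0 1))"
    by (simp add: M.loc_smult_zero[OF M0])
  also have "\<dots> = frac S scN 0 1"
    by (simp add: phi_loc_smult[OF R M0] N.loc_smult_zero phi_in_Loc[OF M0])
  finally show ?thesis .
qed

lemma loc_smult_phi_frac_linear:
  assumes A: "A \<in> Loc S (*)"
  shows "loc_smult S scN A (\<phi> (frac S scM (scM c x + y) 1))
    = loc_add S scN (loc_smult S scN (frac S (*) c 1) (loc_smult S scN A (\<phi> (frac S scM x 1))))
        (loc_smult S scN A (\<phi> (frac S scM y 1)))"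
proof -
  have c: "frac S (*) c 1 \<in> Loc S (*)"
    by (rule localization.frac_in_Loc[OF M.localization_ring M.one_in_S])
  have x: "frac S scM x 1 \<in> Loc S scM" and y: "frac S scM y 1 \<in> Loc S scM"
    by (simp_all add: M.frac_in_Loc M.one_in_S)
  have "frac S scM (scM c x + y) 1
      = loc_add S scM (loc_smult S scM (frac S (*) c 1) (frac S scM x 1)) (frac S scM y 1)"
    by (simp add: M.loc_smult_frac M.loc_add_frac M.one_in_S)
  then have "\<phi> (frac S scM (scM c x + y) 1)
      = loc_add S scN (loc_smult S scN (frac S (*) c 1) (\<phi> (frac S scM x 1))) (\<phi> (frac S scM y 1))"
    by (simp add: phi_loc_add phi_loc_smult c x y M.loc_smult_in_Loc)
  then show ?thesis
    by (simp add: N.loc_smult_add N.loc_smult_commute N.loc_smult_in_Loc A c phi_in_Loc x y)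
qed

lemma loc_map_frac:
  assumes "module_hom scM scN f" "s \<in> S"
  shows "loc_map S scN f (frac S scM x s) = frac S scN (f x) s"
proof -
  interpret f: module_hom scM scN f by fact
  have "frac S scN (f x') s' = frac S scN (f x) s" if rel: "(x', s') \<in> frac S scM x s" for x' s'
  proof -
    obtain u where "s' \<in> S" "u \<in> S" "scM u (scM s' x - scM s x') = 0"
      using rel by (auto simp: M.mem_frac_iff M.loc_rel_iff)
    moreover have "f (scM u (scM s' x - scM s x')) = - scN u (scN s (f x') - scN s' (f x))"
      by (simp add: f.scale f.diff algebra_simps)
    ultimately show ?thesis
      by (intro N.frac_eqI[OF _ assms(2)]) auto
  qed
  then have "{frac S scN (f x') s' | x' s'. (x', s') \<in> frac S scM x s} = {frac S scN (f x) s}"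
    using M.in_frac_self[OF assms(2)] by blast
  then show ?thesis unfolding loc_map_def by simp
qed

lemma clear_denominators:
  assumes "fin_gen_module scM"
  shows "\<exists>s\<in>S. \<forall>m. \<exists>n. loc_smult S scN (frac S (*) s 1) (\<phi> (frac S scM m 1)) = frac S scN n 1"
proof -
  obtain F where F: "finite F" "M.span F = UNIV"
    using assms unfolding fin_gen_module_def by blast
  obtain s where s: "s \<in> S"
    and cleared: "\<forall>x\<in>F. \<exists>n. loc_smult S scN (frac S (*) s 1) (\<phi> (frac S scM x 1)) = frac S scN n 1"
    using N.common_denominator[OF F(1), of "\<lambda>x. \<phi> (frac S scM x 1)"]
    by (auto simp: phi_in_Loc M.frac_in_Loc M.one_in_S)
  have "\<exists>n. loc_smult S scN (frac S (*) s 1) (\<phi> (frac S scM m 1)) = frac S scN n 1" for m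
  proof -
    have "m \<in> M.span F" using F(2) by simp
    then show ?thesis
    proof (induction rule: M.span_induct_alt)
      case base
      show ?case using s by (auto simp: phi_frac_zero N.loc_smult_frac N.one_in_S)
    next
      case (step c x y)
      then obtain n n' where "loc_smult S scN (frac S (*) s 1) (\<phi> (frac S scM x 1)) = frac S scN n 1"
        "loc_smult S scN (frac S (*) s 1) (\<phi> (frac S scM y 1)) = frac S scN n' 1"
        using cleared by blast
      then have "loc_smult S scN (frac S (*) s 1) (\<phi> (frac S scM (scM c x + y) 1)) = frac S scN (scN c n + n') 1"
        using s by (simp add: loc_smult_phi_frac_linear localization.frac_in_Loc[OF M.localization_ring]
            N.loc_smult_frac N.loc_add_frac N.one_in_S)
      then show ?case by blast
    qed
  qed
  with s show ?thesis by blast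
qed

lemma module_hom_of_cleared_denominators:
  assumes no_torsion: "\<And>s n. s \<in> S \<Longrightarrow> scN s n = 0 \<Longrightarrow> n = 0"
    and s: "s \<in> S"
    and cleared: "\<And>m. \<exists>n. loc_smult S scN (frac S (*) s 1) (\<phi> (frac S scM m 1)) = frac S scN n 1"
  shows "\<exists>\<psi>. module_hom scM scN \<psi> \<and>
    (\<forall>X\<in>Loc S scM. loc_map S scN \<psi> X = loc_smult S scN (frac S (*) s 1) (\<phi> X))"
proof -
  let ?u = "frac S (*) s 1"
  have u: "?u \<in> Loc S (*)" by (rule localization.frac_in_Loc[OF M.localization_ring M.one_in_S])
  define \<psi> where "\<psi> m = (SOME n. frac S scN n 1 = loc_smult S scN ?u (\<phi> (frac S scM m 1)))" for m
  have \<psi>: "frac S scN (\<psi> m) 1 = loc_smult S scN ?u (\<phi> (frac S scM m 1))" for m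
    unfolding \<psi>_def by (rule someI_ex) (metis cleared)
  have \<psi>_linear: "\<psi> (scM c x + y) = scN c (\<psi> x) + \<psi> y" for c x y
  proof (rule N.frac_one_inj[OF no_torsion])
    have "frac S scN (\<psi> (scM c x + y)) 1
        = loc_add S scN (loc_smult S scN (frac S (*) c 1) (frac S scN (\<psi> x) 1)) (frac S scN (\<psi> y) 1)"
      by (simp only: \<psi> loc_smult_phi_frac_linear[OF u])
    also have "\<dots> = frac S scN (scN c (\<psi> x) + \<psi> y) 1"
      by (simp add: N.loc_smult_frac N.loc_add_frac N.one_in_S)
    finally show "frac S scN (\<psi> (scM c x + y)) 1 = frac S scN (scN c (\<psi> x) + \<psi> y) 1" .
  qed
  have \<psi>_zero: "\<psi> 0 = 0"
  proof (rule N.frac_one_inj[OF no_torsion])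
    show "frac S scN (\<psi> 0) 1 = frac S scN 0 1"
      using s by (simp add: \<psi> phi_frac_zero N.loc_smult_frac N.one_in_S)
  qed
  have \<psi>_hom: "module_hom scM scN \<psi>"
    unfolding module_hom_iff
    using \<psi>_linear[of 1] \<psi>_linear[of _ _ 0] \<psi>_zero by (simp add: M.module_axioms N.module_axioms)
  have "loc_map S scN \<psi> X = loc_smult S scN ?u (\<phi> X)" if X: "X \<in> Loc S scM" for X
  proof -
    obtain m t where t: "t \<in> S" "X = frac S scM m t" using X by (rule M.Loc_cases)
    have t_inv: "frac S (*) 1 t \<in> Loc S (*)" by (rule localization.frac_in_Loc[OF M.localization_ring t(1)])
    have m: "frac S scM m 1 \<in> Loc S scM" by (rule M.frac_in_Loc[OF M.one_in_S])
    have "X = loc_smult S scM (frac S (*) 1 t) (frac S scM m 1)"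
      using t by (simp add: M.loc_smult_frac M.one_in_S)
    then have "loc_smult S scN ?u (\<phi> X)
        = loc_smult S scN (frac S (*) 1 t) (loc_smult S scN ?u (\<phi> (frac S scM m 1)))"
      by (simp add: phi_loc_smult[OF t_inv m] N.loc_smult_commute[OF u t_inv] phi_in_Loc[OF m])
    also have "\<dots> = frac S scN (\<psi> m) t"
      using t by (simp add: \<psi>[symmetric] N.loc_smult_frac N.one_in_S)
    also have "\<dots> = loc_map S scN \<psi> X"
      using t by (simp add: loc_map_frac[OF \<psi>_hom])
    finally show ?thesis by simp
  qed
  with \<psi>_hom show ?thesis by blast
qed

theorem exists_module_hom_loc_map_eq_unit_smult:
  assumes "fin_gen_module scM" and "\<And>s n. s \<in> S \<Longrightarrow> scN s n = 0 \<Longrightarrow> n = 0"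
  shows "\<exists>\<psi> u. module_hom scM scN \<psi> \<and> loc_unit S u \<and>
    (\<forall>X\<in>Loc S scM. loc_map S scN \<psi> X = loc_smult S scN u (\<phi> X))"
proof -
  obtain s where s: "s \<in> S"
    and cleared: "\<forall>m. \<exists>n. loc_smult S scN (frac S (*) s 1) (\<phi> (frac S scM m 1)) = frac S scN n 1"
    using clear_denominators[OF assms(1)] by blast
  have "\<exists>\<psi>. module_hom scM scN \<psi> \<and>
      (\<forall>X\<in>Loc S scM. loc_map S scN \<psi> X = loc_smult S scN (frac S (*) s 1) (\<phi> X))"
    using assms(2) s cleared[rule_format] by (rule module_hom_of_cleared_denominators)
  with N.loc_unit_frac[OF s] show ?thesis by blast
qed

end

theorem lemma2p3:
  fixes G :: "nat \<Rightarrow> 'r::comm_ring_1 set"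
    and scM :: "'r \<Rightarrow> 'm::ab_group_add \<Rightarrow> 'm" and GM :: "int \<Rightarrow> 'm set"
    and scN :: "'r \<Rightarrow> 'n::ab_group_add \<Rightarrow> 'n" and GN :: "int \<Rightarrow> 'n set"
    and \<phi> :: "('m \<times> 'r) set \<Rightarrow> ('n \<times> 'r) set"
  assumes "graded_ring G" and "degree0_field G"
    and "graded_module G scM GM" and "fin_gen_module scM"
    and "graded_module G scN GN" and "fin_gen_module scN"
    and "torsion_free scN"
    and "loc_module_hom (- hom_max_ideal G) scM scN \<phi>"
  shows "\<exists>\<psi> u. module_hom scM scN \<psi> \<and> loc_unit (- hom_max_ideal G) u \<and>
           (\<forall>X\<in>Loc (- hom_max_ideal G) scM.
              loc_map (- hom_max_ideal G) scN \<psi> X = loc_smult (- hom_max_ideal G) scN u (\<phi> X))"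
proof -
  let ?S = "- hom_max_ideal G"
  have S: "1 \<in> ?S" "\<And>a b. a \<in> ?S \<Longrightarrow> b \<in> ?S \<Longrightarrow> a * b \<in> ?S"
    using one_not_in_hom_max_ideal mult_not_in_hom_max_ideal assms(1,2) by auto
  have "module scM" "module scN"
    using assms(3,5) by (simp_all add: graded_module_def)
  then interpret localized_module_hom scM scN ?S \<phi>
    using S assms(8)
    by (simp add: localized_module_hom_def localized_module_hom_axioms_def
        localization_def localization_axioms_def)
  have "n = 0" if "s \<in> ?S" "scN s n = 0" for s n
    using assms(7) not_in_hom_max_ideal_mult_eq_0[OF assms(1,2)] that
    unfolding torsion_free_def by blast
  then show ?thesis by (rule exists_module_hom_loc_map_eq_unit_smult[OF assms(4)])
qed

end
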